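(* Suppose $\mathcal{F}=\{X;f_\lambda\mid\lambda\in\Lambda\}$ is a minimal IFS on an infinite compact metric space $X$ and $\mathcal{F}$ has some non-periodic regularly recurrent point. Then there exist a sequence $\alpha=(p_1,p_2,\dots)$ of prime numbers and a continuous surjective map $\pi:X\to\Delta_\alpha$ such that $g_\alpha\circ\pi=\pi\circ f_\lambda$ for all $\lambda\in\Lambda$. Moreover, $\pi^{-1}(\pi(x))=\{x\}$ for every regularly recurrent point $x\in X$.
   Context: $\Lambda$ is a finite nonempty set, $f_\lambda:X\to X$ continuous. $\Lambda^{\mathbb{Z}_+}$ is the set of sequences $\sigma=(\lambda_1,\lambda_2,\dots)$ in $\Lambda$, $\mathcal{F}_{\sigma_n}=f_{\lambda_n}\circ\cdots\circ f_{\lambda_1}$, $\mathcal{F}_{\sigma_0}=\mathrm{id}$. A nonempty closed $M\subseteq X$ is $\mathcal{F}^n$-minimal if $\mathcal{F}_{\sigma_n}(M)=M$ for all $\sigma$ and $\mathcal{F}_{\sigma_n}(A)\ne A$ for every nonempty proper $A\subsetneq M$ and every $\sigma$. $\mathcal{F}$ is minimal if the only $\mathcal{F}^1$-minimal set is $X$ (equivalently, every point has a dense set of iterates $f_{\lambda_k}\circ\cdots\circ f_{\lambda_1}(x)$, $k>0$). A point $x$ is regularly recurrent if for every neighborhood $U$ of $x$ there is $n\ge1$ with $\mathcal{F}_{\sigma_{ni}}(x)\in U$ for all $i\ge0$ and all $\sigma$. A point is periodic if some finite composition $f_{\lambda_n}\circ\cdots\circ f_{\lambda_1}$ fixes it.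 For $\alpha=(j_1,j_2,\dots)$ with integers $j_i\ge2$, $\Delta_\alpha$ is the set of sequences $(r_1,r_2,\dots)$ with $r_i\in\{0,\dots,j_i-1\}$, with metric $d_\alpha(r,s)=\sum_i\delta(r_i,s_i)/2^i$ ($\delta(a,b)=1$ if $a\ne b$, else $0$), and $g_\alpha:\Delta_\alpha\to\Delta_\alpha$ is the adding machine map $r\mapsto r+(1,0,0,\dots)$, addition being coordinatewise with carry (first coordinate mod $j_1$, carry into the second coordinate taken mod $j_2$, etc.). *)

theory Defs
  imports "HOL-Analysis.Analysis" "HOL-Computational_Algebra.Primes"
begin

primrec Fiter :: "('l \<Rightarrow> 'a \<Rightarrow> 'a) \<Rightarrow> (nat \<Rightarrow> 'l) \<Rightarrow> nat \<Rightarrow> 'a \<Rightarrow> 'a" where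
  "Fiter f \<sigma> 0 x = x"
| "Fiter f \<sigma> (Suc n) x = f (\<sigma> n) (Fiter f \<sigma> n x)"

definition ifs_minimal :: "'a::topological_space set \<Rightarrow> 'l set \<Rightarrow> ('l \<Rightarrow> 'a \<Rightarrow> 'a) \<Rightarrow> bool" where
  "ifs_minimal X \<Lambda> f \<longleftrightarrow>
     (\<forall>x\<in>X. X \<subseteq> closure {Fiter f \<sigma> k x | \<sigma> k. (\<forall>i. \<sigma> i \<in> \<Lambda>) \<and> k > 0})"

definition regularly_recurrent :: "'a::topological_space set \<Rightarrow> 'l set \<Rightarrow> ('l \<Rightarrow> 'a \<Rightarrow> 'a) \<Rightarrow> 'a \<Rightarrow> bool" where
  "regularly_recurrent X \<Lambda> f x \<longleftrightarrow> x \<in> X \<and>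
     (\<forall>U. open U \<and> x \<in> U \<longrightarrow>
        (\<exists>n\<ge>1. \<forall>\<sigma> i. (\<forall>j. \<sigma> j \<in> \<Lambda>) \<longrightarrow> Fiter f \<sigma> (n * i) x \<in> U))"

definition ifs_periodic :: "'l set \<Rightarrow> ('l \<Rightarrow> 'a \<Rightarrow> 'a) \<Rightarrow> 'a \<Rightarrow> bool" where
  "ifs_periodic \<Lambda> f x \<longleftrightarrow> (\<exists>\<sigma> n. (\<forall>j. \<sigma> j \<in> \<Lambda>) \<and> n \<ge> 1 \<and> Fiter f \<sigma> n x = x)"

text \<open>Adding machine on Delta_alpha; coordinates indexed from 0.\<close>
definition Delta :: "(nat \<Rightarrow> nat) \<Rightarrow> (nat \<Rightarrow> nat) set" where
  "Delta \<alpha> = {r. \<forall>i. r i < \<alpha> i}"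

definition d_alpha :: "(nat \<Rightarrow> nat) \<Rightarrow> (nat \<Rightarrow> nat) \<Rightarrow> real" where
  "d_alpha r s = (\<Sum>i. (if r i \<noteq> s i then 1 else 0) / 2 ^ (Suc i))"

primrec carry :: "(nat \<Rightarrow> nat) \<Rightarrow> (nat \<Rightarrow> nat) \<Rightarrow> nat \<Rightarrow> nat" where
  "carry \<alpha> r 0 = 1"
| "carry \<alpha> r (Suc i) = (r i + carry \<alpha> r i) div \<alpha> i"

definition adding_machine :: "(nat \<Rightarrow> nat) \<Rightarrow> (nat \<Rightarrow> nat) \<Rightarrow> (nat \<Rightarrow> nat)" where
  "adding_machine \<alpha> r = (\<lambda>i. (r i + carry \<alpha> r i) mod \<alpha> i)"

end

theory Submission
  imports Defs "HOL-Number_Theory.Cong"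
begin

(* For a base point b and a period n let cell b n j be the closure of the iterates of b at
   times congruent to j modulo n.  Every f l maps cell j into cell j + 1, and by minimality
   the n cells cover X.  If b is regularly recurrent, the residues c with b in cell b n c are
   the multiples of a divisor d of n, and the d cells of period d are pairwise disjoint;
   if b is moreover non-periodic, such cyclic partitions exist with arbitrarily large d.
   Their periods are closed under lcm and divisors, hence exhausted by the partial products
   of one sequence of primes alpha.  The cell indices of x in these nested partitions are the
   mixed-radix digits of pi x in Delta alpha, on which each f l acts as the adding machine.
   If x is regularly recurrent, the zeroth cell around x of a suitable period lies in any
   given ball around x, and pi y = pi x puts y into that cell; hence the fibre is {x}. *)

lemma least_positive_dvd_iff:
  fixes S :: "nat set" and n :: nat
  assumes "n > 0" and mod_closed: "\<And>c. c \<in> S \<longleftrightarrow> c mod n \<in> S"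
    and "0 \<in> S" and add_closed: "\<And>a b. a \<in> S \<Longrightarrow> b \<in> S \<Longrightarrow> a + b \<in> S"
  shows "c \<in> S \<longleftrightarrow> (LEAST d. 0 < d \<and> d \<in> S) dvd c"
proof -
  define d where "d = (LEAST d. 0 < d \<and> d \<in> S)"
  have "n \<in> S" using mod_closed[of n] \<open>0 \<in> S\<close> by simp
  then have d: "0 < d" "d \<in> S" unfolding d_def using \<open>n > 0\<close> by (metis (mono_tags, lifting) LeastI)+
  have mult_closed: "m * a \<in> S" if "a \<in> S" for a m
    by (induction m) (use \<open>0 \<in> S\<close> add_closed that in auto)
  have "d dvd c" if "c \<in> S"
  proof -
    define q where "q = c div d"
    \<comment> \<open>adding q (n - 1) d, i.e. subtracting q d modulo n, leaves the remainder c mod d in S\<close>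
    have "c + q * (n - 1) * d = c mod d + (q * d) * n"
      using \<open>n > 0\<close> div_mult_mod_eq[of c d] unfolding q_def
      by (cases n) (simp_all add: algebra_simps)
    moreover have "c + q * (n - 1) * d \<in> S" using add_closed[OF that mult_closed[OF d(2), of "q * (n - 1)"]] by simp
    ultimately have "c mod d \<in> S" using mod_closed by (metis mod_mult_self1)
    moreover have "\<not> (0 < c mod d \<and> c mod d \<in> S)"
      using mod_less_divisor[OF d(1), of c] unfolding d_def by (rule not_less_Least)
    ultimately have "c mod d = 0" by simp
    then show ?thesis by auto
  qed
  moreover have "c \<in> S" if "d dvd c" using that mult_closed[OF d(2)] by (auto simp: mult.commute)
  ultimately show ?thesis unfolding d_def by blast
qed

lemma exists_le_add_dvd:
  fixes m i :: nat
  assumes "m > 0"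
  shows "\<exists>t\<le>m. m dvd i + t"
proof -
  have "m * (i div m) + i mod m = i" by (rule mult_div_mod_eq)
  moreover have "i mod m < m" using assms by simp
  ultimately have "i + (m - i mod m) = m * Suc (i div m)" unfolding mult_Suc_right by arith
  then show ?thesis by (intro exI[of _ "m - i mod m"]) auto
qed

lemma dvd_chain_mono:
  fixes E :: "nat \<Rightarrow> 'b::comm_monoid_mult"
  assumes "\<And>k. E k dvd E (Suc k)" and "k \<le> j"
  shows "E k dvd E j"
  using assms(2)
proof (induction j rule: dec_induct)
  case (step j)
  then show ?case using assms(1) dvd_trans by blast
qed simp

lemma dvd_chain_prime_step:
  fixes E :: "nat \<Rightarrow> nat"
  assumes chain: "\<And>k. E k dvd E (Suc k)" and "n > 0" "n dvd E k" "n < E k"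
  obtains p where "prime p" "\<And>k'. n dvd E k' \<Longrightarrow> n < E k' \<Longrightarrow> n * p dvd E k'"
proof -
  define k0 where "k0 = (LEAST k. n dvd E k \<and> n < E k)"
  have k0: "n dvd E k0" "n < E k0" unfolding k0_def by (rule LeastI2[of _ k], use assms in simp_all)+
  have "E k0 div n \<noteq> 1" using k0 by (metis dvd_mult_div_cancel less_irrefl mult_1_right)
  then obtain p where p: "prime p" "p dvd E k0 div n" using prime_factor_nat by blast
  have "n * p dvd E k'" if "n dvd E k'" "n < E k'" for k'
  proof -
    have "k0 \<le> k'" unfolding k0_def by (rule Least_le) (use that in simp)
    moreover have "n * p dvd E k0" using p(2) k0(1) by (metis dvd_mult_div_cancel mult_dvd_mono dvd_refl)
    ultimately show ?thesis using dvd_chain_mono[of E, OF chain] dvd_trans by blast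
  qed
  with p(1) show thesis by (rule that)
qed

lemma prime_refinement_of_dvd_chain:
  fixes E :: "nat \<Rightarrow> nat"
  assumes chain: "\<And>k. E k dvd E (Suc k)" and pos: "\<And>k. E k > 0"
    and unbounded: "\<And>N. \<exists>k. N < E k"
  obtains \<alpha> :: "nat \<Rightarrow> nat" where "\<And>i. prime (\<alpha> i)"
    and "\<And>m. \<exists>k. (\<Prod>i<m. \<alpha> i) dvd E k" and "\<And>k. \<exists>m. E k dvd (\<Prod>i<m. \<alpha> i)"
proof -
  \<comment> \<open>refining a divisor n of the chain by a prime keeps it below every proper multiple of n
      in the chain, so the refinements eventually catch up with every E k\<close>
  define next_prime where
    "next_prime n = (SOME p. prime p \<and> (\<forall>k. n dvd E k \<and> n < E k \<longrightarrow> n * p dvd E k))" for n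
  have above: "\<exists>k. n dvd E k \<and> n < E k" if "n dvd E k0" for n k0
  proof -
    obtain k1 where k1: "n < E k1" using unbounded by blast
    have "E k0 dvd E (max k0 k1)" "E k1 dvd E (max k0 k1)" by (simp_all add: dvd_chain_mono[of E, OF chain])
    then show ?thesis using that k1 pos dvd_trans dvd_imp_le by (metis order.strict_trans2)
  qed
  have step: "prime (next_prime n)" "\<And>k. n dvd E k \<Longrightarrow> n < E k \<Longrightarrow> n * next_prime n dvd E k"
    if n: "n > 0" "n dvd E k0" for n k0
  proof -
    obtain k where "n dvd E k" "n < E k" using above[OF n(2)] by blast
    then obtain p where "prime p" "\<And>k. n dvd E k \<Longrightarrow> n < E k \<Longrightarrow> n * p dvd E k"
      by (rule dvd_chain_prime_step[of E, OF chain n(1)]) blast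
    then have "\<exists>p. prime p \<and> (\<forall>k. n dvd E k \<and> n < E k \<longrightarrow> n * p dvd E k)" by blast
    from someI_ex[OF this] show "prime (next_prime n)" "\<And>k. n dvd E k \<Longrightarrow> n < E k \<Longrightarrow> n * next_prime n dvd E k"
      unfolding next_prime_def by blast+
  qed
  define P where "P = rec_nat 1 (\<lambda>_ n. n * next_prime n)"
  define \<alpha> where "\<alpha> m = next_prime (P m)" for m
  have P_Suc: "P (Suc m) = P m * \<alpha> m" for m by (simp add: P_def \<alpha>_def)
  have P_prod: "P m = (\<Prod>i<m. \<alpha> i)" for m
    by (induction m) (simp add: P_def, simp only: P_Suc prod.lessThan_Suc)
  have P_chain: "P m > 0 \<and> (\<exists>k. P m dvd E k)" for m
  proof (induction m)
    case (Suc m)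
    then obtain k where k: "P m dvd E k" "P m < E k" using above by blast
    then have "P (Suc m) dvd E k" "prime (\<alpha> m)" using step Suc by (auto simp: P_Suc \<alpha>_def)
    then show ?case using Suc prime_gt_0_nat by (auto simp: P_Suc)
  qed (auto simp: P_def)
  then have \<alpha>_prime: "prime (\<alpha> m)" for m using step unfolding \<alpha>_def by blast
  have "P m dvd E k \<or> E k dvd P m" for k m
  proof (induction m)
    case (Suc m)
    show ?case
    proof (cases "E k dvd P m")
      case False
      with Suc.IH have "P m dvd E k" by blast
      moreover have "P m < E k" using False dvd_imp_le[OF calculation pos] nat_less_le by auto
      ultimately show ?thesis using step(2) P_chain by (simp add: P_Suc \<alpha>_def)
    qed (simp add: P_Suc)
  qed (simp add: P_def)
  moreover have "E k < P (E k)" for k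
  proof -
    have "2 ^ m \<le> P m" for m
    proof (induction m)
      case (Suc m)
      have "2 \<le> \<alpha> m" using \<alpha>_prime prime_ge_2_nat by blast
      from mult_le_mono[OF Suc.IH this] show ?case by (simp add: P_Suc mult.commute)
    qed (simp add: P_def)
    then show ?thesis using less_exp[of "E k"] by (meson order.strict_trans2)
  qed
  ultimately have cofinal: "E k dvd P (E k)" for k using dvd_imp_le[OF _ pos] by (meson not_le)
  show thesis
  proof (rule that)
    show "prime (\<alpha> i)" for i by (rule \<alpha>_prime)
    show "\<exists>k. (\<Prod>i<m. \<alpha> i) dvd E k" for m using P_chain unfolding P_prod by blast
    show "\<exists>m. E k dvd (\<Prod>i<m. \<alpha> i)" for k using cofinal unfolding P_prod by blast
  qed
qed

lemma prime_chain_cofinal_in_lcm_closed: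
  fixes G :: "nat set"
  assumes "0 \<notin> G" and "1 \<in> G" and lcm_closed: "\<And>a b. a \<in> G \<Longrightarrow> b \<in> G \<Longrightarrow> lcm a b \<in> G"
    and dvd_closed: "\<And>a d. a \<in> G \<Longrightarrow> d dvd a \<Longrightarrow> d \<in> G"
    and unbounded: "\<And>N. \<exists>g\<in>G. N < g"
  obtains \<alpha> :: "nat \<Rightarrow> nat" where "\<And>i. prime (\<alpha> i)"
    and "\<And>m. (\<Prod>i<m. \<alpha> i) \<in> G" and "\<And>g. g \<in> G \<Longrightarrow> \<exists>m. g dvd (\<Prod>i<m. \<alpha> i)"
proof -
  define E where "E = rec_nat 1 (\<lambda>k e. if Suc k \<in> G then lcm e (Suc k) else e)"
  have E_Suc: "E (Suc k) = (if Suc k \<in> G then lcm (E k) (Suc k) else E k)" for k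
    by (simp add: E_def)
  have E_in: "E k \<in> G" for k
    by (induction k) (use \<open>1 \<in> G\<close> in \<open>simp_all add: E_def lcm_closed\<close>)
  have dvd_E: "g dvd E g" if "g \<in> G" for g
    using that \<open>0 \<notin> G\<close> by (cases g) (simp_all add: E_Suc)
  have pos: "E k > 0" for k using E_in \<open>0 \<notin> G\<close> by (metis gr0I)
  obtain \<alpha> :: "nat \<Rightarrow> nat" where \<alpha>: "\<And>i. prime (\<alpha> i)"
    "\<And>m. \<exists>k. (\<Prod>i<m. \<alpha> i) dvd E k" "\<And>k. \<exists>m. E k dvd (\<Prod>i<m. \<alpha> i)"
  proof (rule prime_refinement_of_dvd_chain)
    show "E k dvd E (Suc k)" for k by (simp add: E_Suc)
    show "E k > 0" for k by (rule pos)
    show "\<exists>k. N < E k" for N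
      using unbounded[of N] dvd_E dvd_imp_le[OF _ pos] by (meson order.strict_trans2)
  qed blast
  show thesis
  proof (rule that)
    show "prime (\<alpha> i)" for i by (rule \<alpha>(1))
    show "(\<Prod>i<m. \<alpha> i) \<in> G" for m using \<alpha>(2)[of m] E_in dvd_closed by blast
    show "\<exists>m. g dvd (\<Prod>i<m. \<alpha> i)" if "g \<in> G" for g
      using \<alpha>(3)[of g] dvd_E[OF that] dvd_trans by blast
  qed
qed

lemma carry_eq_digit_sum:
  assumes "\<And>t. \<alpha> t > 0"
  shows "carry \<alpha> r i = ((\<Sum>t<i. r t * (\<Prod>s<t. \<alpha> s)) + 1) div (\<Prod>s<i. \<alpha> s)"
proof (induction i)
  case (Suc i)
  define N where "N = (\<Prod>s<i. \<alpha> s)"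
  define v where "v = (\<Sum>t<i. r t * (\<Prod>s<t. \<alpha> s))"
  have "N > 0" unfolding N_def using assms by (simp add: prod_pos)
  have "(v + r i * N + 1) div (N * \<alpha> i) = (r i + (v + 1) div N) div \<alpha> i"
  proof -
    have "(v + 1 + r i * N) div N = r i + (v + 1) div N"
      using \<open>N > 0\<close> div_mult_self2[of N "v + 1" "r i"] by (simp add: mult.commute)
    then show ?thesis by (simp only: div_mult2_eq ac_simps)
  qed
  then show ?case using Suc by (simp add: N_def v_def)
qed simp

lemma adding_machine_eq_digit_sum:
  assumes "\<And>t. \<alpha> t > 0"
  shows "adding_machine \<alpha> r i =
    ((\<Sum>t<Suc i. r t * (\<Prod>s<t. \<alpha> s)) + 1) mod (\<Prod>s<Suc i. \<alpha> s) div (\<Prod>s<i. \<alpha> s)"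
proof -
  define N where "N = (\<Prod>s<i. \<alpha> s)"
  define v where "v = (\<Sum>t<i. r t * (\<Prod>s<t. \<alpha> s))"
  have "N > 0" unfolding N_def using assms by (simp add: prod_pos)
  have "(v + r i * N + 1) mod (N * \<alpha> i) div N = (r i + (v + 1) div N) mod \<alpha> i"
  proof -
    have "(v + 1 + r i * N) div N = r i + (v + 1) div N"
      using \<open>N > 0\<close> div_mult_self2[of N "v + 1" "r i"] by (simp add: mult.commute)
    then show ?thesis using \<open>N > 0\<close> by (simp add: mod_mult2_eq ac_simps)
  qed
  then show ?thesis
    unfolding adding_machine_def carry_eq_digit_sum[OF assms] by (simp add: N_def v_def)
qed


lemma d_alpha_le_if_agree:
  assumes "\<And>t. t < K \<Longrightarrow> r t = s t"
  shows "d_alpha r s \<le> (1/2) ^ K"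
proof -
  define g where "g i = (if r i \<noteq> s i then 1 else 0) / (2::real) ^ (Suc i)" for i
  have g0: "0 \<le> g i" for i by (simp add: g_def)
  have gle: "g i \<le> (1/2) ^ Suc i" for i by (simp add: g_def power_one_over)
  have geo: "summable (\<lambda>i. (1/2::real) ^ Suc i)" by simp
  have sg: "summable g"
    by (rule summable_comparison_test[OF _ geo]) (use g0 gle in auto)
  have gK: "g i = 0" if "i < K" for i using assms that by (simp add: g_def)
  have "d_alpha r s = suminf g" unfolding d_alpha_def g_def by (rule refl)
  also have "\<dots> = (\<Sum>n. g (n + K)) + (\<Sum>i<K. g i)" by (rule suminf_split_initial_segment[OF sg])
  also have "(\<Sum>i<K. g i) = 0" using gK by simp
  also have "(\<Sum>n. g (n + K)) \<le> (\<Sum>n. (1/2::real) ^ K * ((1/2) * (1/2) ^ n))"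
  proof (rule suminf_le)
    show "g (n + K) \<le> (1/2) ^ K * ((1/2) * (1/2) ^ n)" for n
      using gle[of "n + K"] by (simp add: power_add mult_ac)
    show "summable (\<lambda>n. g (n + K))" using sg by simp
    show "summable (\<lambda>n. (1/2::real) ^ K * ((1/2) * (1/2) ^ n))"
      by (intro summable_mult summable_geometric) simp
  qed
  also have "(\<Sum>n. (1/2::real) ^ K * ((1/2) * (1/2) ^ n)) = (1/2) ^ K"
  proof -
    have "(\<lambda>n. (1/2::real) ^ n) sums (1 / (1 - 1/2))" by (rule geometric_sums) simp
    then have "(\<lambda>n. (1/2::real) ^ K * ((1/2) * (1/2) ^ n)) sums ((1/2) ^ K * ((1/2) * (1 / (1 - 1/2))))"
      by (intro sums_mult)
    then show ?thesis by (simp add: sums_iff)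
  qed
  finally show ?thesis by simp
qed

lemma Fiter_cong: "(\<And>i. i < k \<Longrightarrow> \<sigma> i = \<tau> i) \<Longrightarrow> Fiter f \<sigma> k x = Fiter f \<tau> k x"
  by (induction k) auto

lemma Fiter_add: "Fiter f \<sigma> (k + m) x = Fiter f (\<lambda>i. \<sigma> (i + k)) m (Fiter f \<sigma> k x)"
  by (induction m) (auto simp: add.commute)

definition concat_seq :: "nat \<Rightarrow> (nat \<Rightarrow> 'l) \<Rightarrow> (nat \<Rightarrow> 'l) \<Rightarrow> nat \<Rightarrow> 'l" where
  "concat_seq k \<sigma> \<tau> i = (if i < k then \<sigma> i else \<tau> (i - k))"

lemma Fiter_concat_seq: "Fiter f (concat_seq k \<sigma> \<tau>) (k + m) x = Fiter f \<tau> m (Fiter f \<sigma> k x)"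
proof -
  have "(\<lambda>i. concat_seq k \<sigma> \<tau> (i + k)) = \<tau>" by (auto simp: concat_seq_def)
  moreover have "Fiter f (concat_seq k \<sigma> \<tau>) k x = Fiter f \<sigma> k x"
    by (rule Fiter_cong) (simp add: concat_seq_def)
  ultimately show ?thesis by (simp add: Fiter_add)
qed

locale ifs =
  fixes X :: "'a::metric_space set" and \<Lambda> :: "'l set" and f :: "'l \<Rightarrow> 'a \<Rightarrow> 'a"
  assumes finite_labels: "finite \<Lambda>" and labels_nonempty: "\<Lambda> \<noteq> {}"
    and compact_X: "compact X"
    and continuous_maps: "\<And>l. l \<in> \<Lambda> \<Longrightarrow> continuous_on X (f l)"
    and maps_into: "\<And>l. l \<in> \<Lambda> \<Longrightarrow> f l ` X \<subseteq> X"
    and minimal: "ifs_minimal X \<Lambda> f"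
begin

definition admissible :: "(nat \<Rightarrow> 'l) \<Rightarrow> bool" where
  "admissible \<sigma> \<longleftrightarrow> (\<forall>i. \<sigma> i \<in> \<Lambda>)"

definition orbit_residue :: "'a \<Rightarrow> nat \<Rightarrow> nat \<Rightarrow> 'a set" where
  "orbit_residue b n j = {Fiter f \<sigma> k b | \<sigma> k. admissible \<sigma> \<and> k mod n = j}"

definition cell :: "'a \<Rightarrow> nat \<Rightarrow> nat \<Rightarrow> 'a set" where
  "cell b n j = closure (orbit_residue b n j)"

lemma closed_X: "closed X"
  using compact_X compact_imp_closed by blast

lemma admissible_concat_seq: "admissible \<sigma> \<Longrightarrow> admissible \<tau> \<Longrightarrow> admissible (concat_seq k \<sigma> \<tau>)"
  by (auto simp: admissible_def concat_seq_def)

lemma admissible_shift: "admissible \<sigma> \<Longrightarrow> admissible (\<lambda>i. \<sigma> (i + k))"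
  by (auto simp: admissible_def)

lemma admissible_exists: obtains \<tau> where "admissible \<tau>"
proof -
  obtain l where "l \<in> \<Lambda>" using labels_nonempty by blast
  then show thesis by (intro that[of "\<lambda>_. l"]) (simp add: admissible_def)
qed

lemma Fiter_in_X: "b \<in> X \<Longrightarrow> admissible \<sigma> \<Longrightarrow> Fiter f \<sigma> k b \<in> X"
  by (induction k) (use maps_into in \<open>auto simp: admissible_def\<close>)

lemma continuous_on_Fiter: "admissible \<sigma> \<Longrightarrow> continuous_on X (Fiter f \<sigma> k)"
proof (induction k)
  case (Suc k)
  have "continuous_on X (\<lambda>x. f (\<sigma> k) (Fiter f \<sigma> k x))"
    by (rule continuous_on_compose2[OF continuous_maps Suc.IH])
      (use Suc.prems Fiter_in_X in \<open>auto simp: admissible_def\<close>)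
  then show ?case by simp
qed simp

lemma closed_cell: "closed (cell b n j)"
  by (simp add: cell_def)

lemma cell_subset_X: "b \<in> X \<Longrightarrow> cell b n j \<subseteq> X"
  unfolding cell_def orbit_residue_def using Fiter_in_X closed_X
  by (intro closure_minimal) auto

lemma Fiter_in_cell: "admissible \<sigma> \<Longrightarrow> Fiter f \<sigma> k b \<in> cell b n (k mod n)"
  unfolding cell_def orbit_residue_def by (blast intro: closure_subset[THEN subsetD])

lemma self_in_cell_zero: "b \<in> cell b n 0"
proof -
  obtain \<tau> where "admissible \<tau>" by (rule admissible_exists)
  from Fiter_in_cell[OF this, of 0 b n] show ?thesis by simp
qed

lemma cell_nonempty: "j < n \<Longrightarrow> cell b n j \<noteq> {}"
proof -
  assume "j < n"
  obtain \<tau> where "admissible \<tau>" by (rule admissible_exists)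
  from Fiter_in_cell[OF this, of j b n] \<open>j < n\<close> show ?thesis by auto
qed

lemma Fiter_image_cell:
  assumes "b \<in> X" and \<tau>: "admissible \<tau>"
  shows "Fiter f \<tau> m ` cell b n j \<subseteq> cell b n ((j + m) mod n)"
  unfolding cell_def
proof (rule image_closure_subset)
  show "continuous_on (closure (orbit_residue b n j)) (Fiter f \<tau> m)"
    using continuous_on_Fiter[OF \<tau>] cell_subset_X[OF \<open>b \<in> X\<close>] unfolding cell_def
    by (rule continuous_on_subset)
  show "Fiter f \<tau> m ` orbit_residue b n j \<subseteq> closure (orbit_residue b n ((j + m) mod n))"
  proof
    fix z assume "z \<in> Fiter f \<tau> m ` orbit_residue b n j"
    then obtain \<sigma> k where z: "z = Fiter f \<tau> m (Fiter f \<sigma> k b)" "admissible \<sigma>" "k mod n = j"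
      by (auto simp: orbit_residue_def)
    then have "z = Fiter f (concat_seq k \<sigma> \<tau>) (k + m) b" by (simp add: Fiter_concat_seq)
    moreover have "(k + m) mod n = (j + m) mod n" using z(3) by (metis mod_add_left_eq)
    ultimately show "z \<in> closure (orbit_residue b n ((j + m) mod n))"
      using Fiter_in_cell[OF admissible_concat_seq[OF z(2) \<tau>], where k = "k + m" and b = b and n = n] by (simp add: cell_def)
  qed
qed simp

lemma map_in_cell:
  assumes "b \<in> X" "l \<in> \<Lambda>" "z \<in> cell b n j"
  shows "f l z \<in> cell b n ((j + 1) mod n)"
proof -
  have "admissible (\<lambda>_. l)" using assms by (simp add: admissible_def)
  from Fiter_image_cell[OF assms(1) this, of 1 n j] assms(3) show ?thesis by force
qed

lemma X_subset_cells:
  assumes "b \<in> X" and "n > 0"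
  shows "X \<subseteq> (\<Union>j<n. cell b n j)"
proof -
  have "X \<subseteq> closure {Fiter f \<sigma> k b | \<sigma> k. (\<forall>i. \<sigma> i \<in> \<Lambda>) \<and> k > 0}"
    using minimal \<open>b \<in> X\<close> by (auto simp: ifs_minimal_def)
  also have "\<dots> \<subseteq> closure (\<Union>j<n. orbit_residue b n j)"
  proof (intro closure_mono subsetI)
    fix z assume "z \<in> {Fiter f \<sigma> k b | \<sigma> k. (\<forall>i. \<sigma> i \<in> \<Lambda>) \<and> k > 0}"
    then obtain \<sigma> k where "z = Fiter f \<sigma> k b" "admissible \<sigma>" by (auto simp: admissible_def)
    then have "z \<in> orbit_residue b n (k mod n)" unfolding orbit_residue_def by blast
    then show "z \<in> (\<Union>j<n. orbit_residue b n j)" using \<open>n > 0\<close> by auto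
  qed
  also have "\<dots> \<subseteq> (\<Union>j<n. cell b n j)"
    by (intro closure_minimal) (auto simp: cell_def intro: closure_subset[THEN subsetD])
  finally show ?thesis .
qed

lemma cell_subset_cell_dvd:
  assumes "d dvd n"
  shows "cell b n j \<subseteq> cell b d (j mod d)"
  unfolding cell_def
proof (intro closure_mono subsetI)
  fix z assume "z \<in> orbit_residue b n j"
  then obtain \<sigma> k where z: "z = Fiter f \<sigma> k b" "admissible \<sigma>" "k mod n = j"
    by (auto simp: orbit_residue_def)
  then have "k mod d = j mod d" using assms by (metis mod_mod_cancel)
  with z show "z \<in> orbit_residue b d (j mod d)" unfolding orbit_residue_def by blast
qed

lemma cell_subset_refined_cells:
  assumes "d dvd n" and "n > 0"
  shows "cell b d a \<subseteq> (\<Union>j\<in>{j. j < n \<and> j mod d = a}. cell b n j)"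
  unfolding cell_def
proof (rule closure_minimal)
  show "orbit_residue b d a \<subseteq> (\<Union>j\<in>{j. j < n \<and> j mod d = a}. closure (orbit_residue b n j))"
  proof
    fix z assume "z \<in> orbit_residue b d a"
    then obtain \<sigma> k where z: "z = Fiter f \<sigma> k b" "admissible \<sigma>" "k mod d = a"
      by (auto simp: orbit_residue_def)
    then have "z \<in> closure (orbit_residue b n (k mod n))"
      using Fiter_in_cell by (simp add: cell_def)
    moreover have "k mod n < n" "(k mod n) mod d = a" using assms z(3) by (auto simp: mod_mod_cancel)
    ultimately show "z \<in> (\<Union>j\<in>{j. j < n \<and> j mod d = a}. closure (orbit_residue b n j))" by blast
  qed
qed auto

lemma cell_shift:
  assumes "a \<in> X" and "b \<in> cell a n c"
  shows "cell b n t \<subseteq> cell a n ((c + t) mod n)"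
  unfolding cell_def
proof (rule closure_minimal)
  show "orbit_residue b n t \<subseteq> closure (orbit_residue a n ((c + t) mod n))"
  proof
    fix z assume "z \<in> orbit_residue b n t"
    then obtain \<sigma> k where z: "z = Fiter f \<sigma> k b" "admissible \<sigma>" "k mod n = t"
      by (auto simp: orbit_residue_def)
    have "z \<in> cell a n ((c + k) mod n)" using Fiter_image_cell[OF assms(1) z(2), of k n c] assms(2) z(1) by blast
    moreover have "(c + k) mod n = (c + t) mod n" using z(3) by (metis mod_add_right_eq)
    ultimately show "z \<in> closure (orbit_residue a n ((c + t) mod n))" by (simp add: cell_def)
  qed
qed simp

lemma regularly_recurrentD:
  assumes "regularly_recurrent X \<Lambda> f b" "open U" "b \<in> U"
  obtains n where "n \<ge> 1" "\<And>\<sigma> i. admissible \<sigma> \<Longrightarrow> Fiter f \<sigma> (n * i) b \<in> U"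
  using assms unfolding regularly_recurrent_def admissible_def by blast

lemma closed_uniform_return: "closed {y \<in> X. \<forall>\<tau>. admissible \<tau> \<longrightarrow> dist (Fiter f \<tau> m y) b \<le> r}"
proof -
  have "{y \<in> X. \<forall>\<tau>. admissible \<tau> \<longrightarrow> dist (Fiter f \<tau> m y) b \<le> r}
      = X \<inter> (\<Inter>\<tau>\<in>{\<tau>. admissible \<tau>}. X \<inter> Fiter f \<tau> m -` cball b r)"
    by (auto simp: dist_commute)
  also have "closed \<dots>"
    by (intro closed_Int closed_X closed_INT ballI continuous_closed_preimage continuous_on_Fiter)
      simp_all
  finally show ?thesis .
qed

lemma return_from_cell_zero:
  assumes "b \<in> X" "regularly_recurrent X \<Lambda> f b" and "n > 0" and w: "w \<in> cell b n 0"
  shows "b \<in> closure {Fiter f \<tau> (n * i) w | \<tau> i. admissible \<tau>}"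
  unfolding closure_approachable
proof (intro allI impI)
  fix e :: real assume "e > 0"
  obtain n' where n': "n' \<ge> 1" "\<And>\<sigma> i. admissible \<sigma> \<Longrightarrow> Fiter f \<sigma> (n' * i) b \<in> ball b (e/2)"
    using regularly_recurrentD[OF assms(2), of "ball b (e/2)"] \<open>e > 0\<close> by auto
  \<comment> \<open>points of the zeroth cell return close to b at some time n t with t \<le> n', since
      orbit points of b in that cell do and the set of such points is closed\<close>
  define A where "A t = {y \<in> X. \<forall>\<tau>. admissible \<tau> \<longrightarrow> dist (Fiter f \<tau> (n * t) y) b \<le> e/2}" for t
  have closed_A: "closed (A t)" for t unfolding A_def by (rule closed_uniform_return)
  have "orbit_residue b n 0 \<subseteq> (\<Union>t\<le>n'. A t)"
  proof
    fix y assume "y \<in> orbit_residue b n 0"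
    then obtain \<sigma> i where y: "y = Fiter f \<sigma> (n * i) b" "admissible \<sigma>"
      by (auto simp: orbit_residue_def)
    obtain t where "t \<le> n'" "n' dvd i + t" using exists_le_add_dvd[of n' i] n'(1) by auto
    then obtain q where q: "i + t = n' * q" by blast
    have "y \<in> A t" unfolding A_def
    proof (intro CollectI conjI allI impI)
      show "y \<in> X" using y Fiter_in_X \<open>b \<in> X\<close> by simp
      fix \<tau> assume \<tau>: "admissible \<tau>"
      have "Fiter f \<tau> (n * t) y = Fiter f (concat_seq (n * i) \<sigma> \<tau>) (n' * (n * q)) b"
        using q by (simp add: y Fiter_concat_seq[symmetric] distrib_left[symmetric] mult.left_commute)
      then show "dist (Fiter f \<tau> (n * t) y) b \<le> e/2"
        using n'(2)[OF admissible_concat_seq[OF y(2) \<tau>, of "n * i"], of "n * q"]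
        by (simp add: dist_commute)
    qed
    with \<open>t \<le> n'\<close> show "y \<in> (\<Union>t\<le>n'. A t)" by blast
  qed
  then have "cell b n 0 \<subseteq> (\<Union>t\<le>n'. A t)"
    unfolding cell_def by (intro closure_minimal closed_UN) (auto intro: closed_A)
  then obtain t where "w \<in> A t" using w by blast
  obtain \<tau> where \<tau>: "admissible \<tau>" by (rule admissible_exists)
  then have "dist (Fiter f \<tau> (n * t) w) b < e" using \<open>w \<in> A t\<close> \<open>e > 0\<close> unfolding A_def by fastforce
  then show "\<exists>y\<in>{Fiter f \<tau> (n * i) w | \<tau> i. admissible \<tau>}. dist y b < e" using \<tau> by blast
qed

lemma self_in_cell_if_meets_cell_zero:
  assumes "b \<in> X" "regularly_recurrent X \<Lambda> f b" and "c < n"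
    and "w \<in> cell b n 0" "w \<in> cell b n c"
  shows "b \<in> cell b n c"
proof -
  have "{Fiter f \<tau> (n * i) w | \<tau> i. admissible \<tau>} \<subseteq> cell b n c"
  proof
    fix z assume "z \<in> {Fiter f \<tau> (n * i) w | \<tau> i. admissible \<tau>}"
    then obtain \<tau> i where "z = Fiter f \<tau> (n * i) w" "admissible \<tau>" by blast
    then have "z \<in> cell b n ((c + n * i) mod n)"
      using Fiter_image_cell[of b \<tau> "n * i" n c] assms(1,5) by blast
    then show "z \<in> cell b n c" using \<open>c < n\<close> by simp
  qed
  then have "closure {Fiter f \<tau> (n * i) w | \<tau> i. admissible \<tau>} \<subseteq> cell b n c"
    by (intro closure_minimal closed_cell)
  then show ?thesis using return_from_cell_zero[OF assms(1,2) _ assms(4)] assms(3) by auto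
qed

lemma self_in_cell_add:
  assumes "b \<in> X" "b \<in> cell b n (c mod n)" "b \<in> cell b n (c' mod n)"
  shows "b \<in> cell b n ((c + c') mod n)"
  using cell_shift[OF assms(1,3), of "c mod n"] assms(2) by (auto simp: mod_add_eq add.commute)

definition return_period :: "'a \<Rightarrow> nat \<Rightarrow> nat" where
  "return_period b n = (LEAST d. 0 < d \<and> b \<in> cell b n (d mod n))"

lemma self_in_cell_iff_return_period_dvd:
  assumes "b \<in> X" and "n > 0"
  shows "b \<in> cell b n (c mod n) \<longleftrightarrow> return_period b n dvd c"
  unfolding return_period_def
  using least_positive_dvd_iff[of n "{c. b \<in> cell b n (c mod n)}" c] assms
  by (simp add: self_in_cell_zero self_in_cell_add)

lemma return_period_dvd: "b \<in> X \<Longrightarrow> n > 0 \<Longrightarrow> return_period b n dvd n"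
  using self_in_cell_iff_return_period_dvd[of b n n] self_in_cell_zero by simp

lemma cell_return_period_zero:
  assumes "b \<in> X" and "n > 0"
  shows "cell b (return_period b n) 0 \<subseteq> cell b n 0"
proof
  let ?d = "return_period b n"
  fix z assume "z \<in> cell b ?d 0"
  then obtain a where a: "a < n" "?d dvd a" "z \<in> cell b n a"
    using cell_subset_refined_cells[OF return_period_dvd[OF assms] \<open>n > 0\<close>] by blast
  \<comment> \<open>shifting by (n - 1) a, a multiple of the return period, moves cell a to cell 0\<close>
  have "b \<in> cell b n (((n - 1) * a) mod n)"
    using self_in_cell_iff_return_period_dvd[OF assms] a(2) by simp
  from cell_shift[OF assms(1) this, of a] a(3) have "z \<in> cell b n (((n - 1) * a + a) mod n)"
    by (auto simp: mod_add_left_eq)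
  moreover have "(n - 1) * a + a = n * a" using \<open>n > 0\<close> by (cases n) auto
  ultimately show "z \<in> cell b n 0" by simp
qed

definition cyclic_partition :: "'a \<Rightarrow> nat \<Rightarrow> bool" where
  "cyclic_partition b d \<longleftrightarrow> d > 0 \<and>
     (\<forall>j j'. j < d \<longrightarrow> j' < d \<longrightarrow> j \<noteq> j' \<longrightarrow> cell b d j \<inter> cell b d j' = {})"

lemma cyclic_partition_return_period:
  assumes b: "b \<in> X" "regularly_recurrent X \<Lambda> f b" and "n > 0"
  shows "cyclic_partition b (return_period b n)"
proof -
  let ?d = "return_period b n"
  have d: "?d dvd n" "?d > 0" using return_period_dvd[OF b(1) \<open>n > 0\<close>] \<open>n > 0\<close> dvd_pos_nat by auto
  have "cell b ?d j \<inter> cell b ?d j' = {}" if j: "j < ?d" "j' < ?d" "j \<noteq> j'" for j j'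
  proof (rule ccontr)
    assume "cell b ?d j \<inter> cell b ?d j' \<noteq> {}"
    then obtain z a a' where a: "a < n" "a mod ?d = j" "z \<in> cell b n a"
      and a': "a' < n" "a' mod ?d = j'" "z \<in> cell b n a'"
      using cell_subset_refined_cells[OF d(1) \<open>n > 0\<close>] by blast
    \<comment> \<open>moving z forward by n - a lands in cell 0 and in cell c; then b lies in cell c\<close>
    obtain \<tau> where \<tau>: "admissible \<tau>" by (rule admissible_exists)
    define c where "c = (a' + (n - a)) mod n"
    have "Fiter f \<tau> (n - a) z \<in> cell b n ((a + (n - a)) mod n)" "Fiter f \<tau> (n - a) z \<in> cell b n c"
      using Fiter_image_cell[OF b(1) \<tau>] a(3) a'(3) unfolding c_def by blast+
    then have "b \<in> cell b n c"
      using a(1) \<open>n > 0\<close> by (intro self_in_cell_if_meets_cell_zero[OF b]) (simp_all add: c_def)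
    then have "?d dvd a' + (n - a)"
      using self_in_cell_iff_return_period_dvd[OF b(1) \<open>n > 0\<close>] unfolding c_def by simp
    then have "a mod ?d = (a' + n) mod ?d"
      using mod_eq_dvd_iff_nat[of a "a' + n" ?d] a(1) by simp
    also have "\<dots> = a' mod ?d"
      using d(1) by (metis add.right_neutral dvd_imp_mod_0 mod_add_right_eq)
    finally show False using a a' j by simp
  qed
  with d(2) show ?thesis by (simp add: cyclic_partition_def)
qed

lemma cyclic_partition_base_change:
  assumes "a \<in> X" "b \<in> X" and "cyclic_partition a n"
  shows "cyclic_partition b n"
proof -
  have "n > 0" using assms(3) by (simp add: cyclic_partition_def)
  obtain c where c: "c < n" "b \<in> cell a n c" using X_subset_cells[OF assms(1) \<open>n > 0\<close>] assms(2) by blast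
  have "cell b n t \<inter> cell b n t' = {}" if t: "t < n" "t' < n" "t \<noteq> t'" for t t'
  proof -
    have "(c + t) mod n \<noteq> (c + t') mod n"
      using t cong_less_modulus_unique_nat cong_add_lcancel_nat unfolding cong_def by metis
    then have "cell a n ((c + t) mod n) \<inter> cell a n ((c + t') mod n) = {}"
      using assms(3) \<open>n > 0\<close> unfolding cyclic_partition_def by simp
    then show ?thesis using cell_shift[OF assms(1) c(2)] by blast
  qed
  with \<open>n > 0\<close> show ?thesis by (simp add: cyclic_partition_def)
qed

lemma cyclic_partition_dvd:
  assumes "cyclic_partition b n" and "d dvd n"
  shows "cyclic_partition b d"
proof -
  have "n > 0" using assms(1) by (simp add: cyclic_partition_def)
  then have "d > 0" using assms(2) by (auto intro: gr0I)
  have "cell b d j \<inter> cell b d j' = {}" if j: "j < d" "j' < d" "j \<noteq> j'" for j j'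
  proof (rule ccontr)
    assume "cell b d j \<inter> cell b d j' \<noteq> {}"
    then obtain z a a' where "a < n" "a mod d = j" "z \<in> cell b n a"
      and "a' < n" "a' mod d = j'" "z \<in> cell b n a'"
      using cell_subset_refined_cells[OF assms(2) \<open>n > 0\<close>] by blast
    with j assms(1) show False unfolding cyclic_partition_def by blast
  qed
  with \<open>d > 0\<close> show ?thesis by (simp add: cyclic_partition_def)
qed

lemma cyclic_partition_lcm:
  assumes p: "cyclic_partition b p" and q: "cyclic_partition b q"
  shows "cyclic_partition b (lcm p q)"
proof -
  have "p > 0" "q > 0" using p q by (simp_all add: cyclic_partition_def)
  have "cell b (lcm p q) j \<inter> cell b (lcm p q) j' = {}"
    if j: "j < lcm p q" "j' < lcm p q" "j \<noteq> j'" for j j'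
  proof (cases "[j = j'] (mod p) \<and> [j = j'] (mod q)")
    case True
    then have "[j = j'] (mod lcm p q)" by (blast intro: cong_cong_lcm_nat)
    with j show ?thesis by (simp add: cong_def)
  next
    case False
    then consider "j mod p \<noteq> j' mod p" | "j mod q \<noteq> j' mod q" by (auto simp: cong_def)
    then show ?thesis
    proof cases
      case 1
      then have "cell b p (j mod p) \<inter> cell b p (j' mod p) = {}"
        using p \<open>p > 0\<close> unfolding cyclic_partition_def by simp
      then show ?thesis
        using cell_subset_cell_dvd[of p "lcm p q" b j] cell_subset_cell_dvd[of p "lcm p q" b j'] by auto
    next
      case 2
      then have "cell b q (j mod q) \<inter> cell b q (j' mod q) = {}"
        using q \<open>q > 0\<close> unfolding cyclic_partition_def by simp
      then show ?thesis
        using cell_subset_cell_dvd[of q "lcm p q" b j] cell_subset_cell_dvd[of q "lcm p q" b j'] by auto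
    qed
  qed
  then show ?thesis using \<open>p > 0\<close> \<open>q > 0\<close> by (simp add: cyclic_partition_def lcm_pos_nat)
qed

definition cell_index :: "'a \<Rightarrow> nat \<Rightarrow> 'a \<Rightarrow> nat" where
  "cell_index b n x = (THE j. j < n \<and> x \<in> cell b n j)"

lemma cell_index_unique:
  assumes "cyclic_partition b n" "j < n" "x \<in> cell b n j"
  shows "cell_index b n x = j"
  unfolding cell_index_def
proof (rule the_equality)
  fix j' assume "j' < n \<and> x \<in> cell b n j'"
  then show "j' = j" using assms unfolding cyclic_partition_def by blast
qed (use assms in simp)

lemma cell_index_correct:
  assumes "b \<in> X" "cyclic_partition b n" "x \<in> X"
  shows "cell_index b n x < n" "x \<in> cell b n (cell_index b n x)"
proof -
  have "n > 0" using assms(2) by (simp add: cyclic_partition_def)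
  then obtain j where "j < n" "x \<in> cell b n j" using X_subset_cells[OF assms(1)] assms(3) by blast
  then show "cell_index b n x < n" "x \<in> cell b n (cell_index b n x)"
    using cell_index_unique[OF assms(2)] by auto
qed

lemma finite_Fiter_maps: "finite {Fiter f \<tau> k | \<tau>. admissible \<tau>}"
proof (induction k)
  case 0
  have "{Fiter f \<tau> 0 | \<tau>. admissible \<tau>} \<subseteq> {\<lambda>x. x}" by (auto simp: fun_eq_iff)
  then show ?case using finite_subset by blast
next
  case (Suc k)
  have "{Fiter f \<tau> (Suc k) | \<tau>. admissible \<tau>}
      \<subseteq> (\<lambda>(l, g) x. f l (g x)) ` (\<Lambda> \<times> {Fiter f \<tau> k | \<tau>. admissible \<tau>})"
  proof
    fix h assume "h \<in> {Fiter f \<tau> (Suc k) | \<tau>. admissible \<tau>}"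
    then obtain \<tau> where "h = Fiter f \<tau> (Suc k)" "admissible \<tau>" by blast
    then have "h = (\<lambda>(l, g) x. f l (g x)) (\<tau> k, Fiter f \<tau> k)"
      "(\<tau> k, Fiter f \<tau> k) \<in> \<Lambda> \<times> {Fiter f \<tau> k | \<tau>. admissible \<tau>}"
      by (auto simp: fun_eq_iff admissible_def)
    then show "h \<in> (\<lambda>(l, g) x. f l (g x)) ` (\<Lambda> \<times> {Fiter f \<tau> k | \<tau>. admissible \<tau>})"
      by (rule image_eqI)
  qed
  moreover have "finite ((\<lambda>(l, g) x. f l (g x)) ` (\<Lambda> \<times> {Fiter f \<tau> k | \<tau>. admissible \<tau>}))"
    using finite_labels Suc by simp
  ultimately show ?case by (rule finite_subset)
qed

lemma nonperiodic_escape: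
  assumes "x0 \<in> X" "\<not> ifs_periodic \<Lambda> f x0"
  obtains \<epsilon> \<delta> where "\<epsilon> > 0" "\<delta> > 0"
    "\<And>y \<sigma> k. y \<in> X \<Longrightarrow> dist y x0 < \<epsilon> \<Longrightarrow> admissible \<sigma> \<Longrightarrow> 1 \<le> k \<Longrightarrow> k \<le> N \<Longrightarrow>
       \<delta> < dist x0 (Fiter f \<sigma> k y)"
proof -
  define M where "M = (\<Union>k\<in>{1..N}. {Fiter f \<tau> k | \<tau>. admissible \<tau>})"
  have "finite M" unfolding M_def by (intro finite_UN_I finite_atLeastAtMost finite_Fiter_maps)
  have "g x0 \<noteq> x0" if "g \<in> M" for g
  proof
    assume "g x0 = x0"
    from \<open>g \<in> M\<close> obtain k \<tau> where "1 \<le> k" "admissible \<tau>" "g = Fiter f \<tau> k"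
      unfolding M_def by auto
    with \<open>g x0 = x0\<close> assms(2) show False unfolding ifs_periodic_def admissible_def by auto
  qed
  then have "x0 \<notin> (\<lambda>g. g x0) ` M" by (metis imageE)
  moreover have "closed ((\<lambda>g. g x0) ` M)" using \<open>finite M\<close> by (simp add: finite_imp_closed)
  ultimately obtain \<delta> where \<delta>: "\<delta> > 0" "ball x0 \<delta> \<subseteq> - (\<lambda>g. g x0) ` M"
    by (metis ComplI open_Compl open_contains_ball)
  define C where "C = (\<Union>g\<in>M. X \<inter> g -` cball x0 (\<delta>/2))"
  have "closed C" unfolding C_def
    by (intro closed_UN \<open>finite M\<close> ballI continuous_closed_preimage closed_X closed_cball)
      (auto simp: M_def intro: continuous_on_Fiter)
  moreover have "x0 \<notin> C"
  proof
    assume "x0 \<in> C"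
    then obtain g where "g \<in> M" "dist x0 (g x0) \<le> \<delta>/2" by (auto simp: C_def)
    moreover have "g x0 \<notin> ball x0 \<delta>" using \<delta>(2) \<open>g \<in> M\<close> by blast
    ultimately show False using \<open>\<delta> > 0\<close> by simp
  qed
  ultimately obtain \<epsilon> where \<epsilon>: "\<epsilon> > 0" "ball x0 \<epsilon> \<subseteq> - C"
    using open_contains_ball[of "- C"] by (auto simp: open_Compl)
  show thesis
  proof (rule that[OF \<epsilon>(1) half_gt_zero[OF \<delta>(1)]])
    fix y \<sigma> k assume "y \<in> X" "dist y x0 < \<epsilon>" "admissible \<sigma>" "1 \<le> k" "k \<le> N"
    then have "Fiter f \<sigma> k \<in> M" "y \<notin> C" using \<epsilon>(2) by (auto simp: M_def dist_commute)
    with \<open>y \<in> X\<close> show "\<delta> / 2 < dist x0 (Fiter f \<sigma> k y)" by (force simp: C_def)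
  qed
qed

lemma far_cells:
  assumes "x0 \<in> X" "regularly_recurrent X \<Lambda> f x0" "\<not> ifs_periodic \<Lambda> f x0"
  obtains n where "n > N" "\<And>c. 1 \<le> c \<Longrightarrow> c \<le> N \<Longrightarrow> x0 \<notin> cell x0 n c"
proof -
  obtain \<epsilon> \<delta> where \<epsilon>\<delta>: "\<epsilon> > 0" "\<delta> > 0" "\<And>y \<sigma> k. y \<in> X \<Longrightarrow> dist y x0 < \<epsilon> \<Longrightarrow>
      admissible \<sigma> \<Longrightarrow> 1 \<le> k \<Longrightarrow> k \<le> N \<Longrightarrow> \<delta> < dist x0 (Fiter f \<sigma> k y)"
    using nonperiodic_escape[OF assms(1,3)] by blast
  obtain p where p: "p \<ge> 1" "\<And>\<sigma> i. admissible \<sigma> \<Longrightarrow> Fiter f \<sigma> (p * i) x0 \<in> ball x0 \<epsilon>"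
    using regularly_recurrentD[OF assms(2), of "ball x0 \<epsilon>"] \<open>\<epsilon> > 0\<close> by auto
  \<comment> \<open>times \<equiv> c (mod n) are c steps after a return to ball x0 \<epsilon>\<close>
  define n where "n = p * (N + 1)"
  have "n > N" using mult_le_mono1[OF p(1), of "N + 1"] by (simp add: n_def)
  moreover have "x0 \<notin> cell x0 n c" if c: "1 \<le> c" "c \<le> N" for c
  proof -
    have "orbit_residue x0 n c \<subseteq> - ball x0 \<delta>"
    proof
      fix z assume "z \<in> orbit_residue x0 n c"
      then obtain \<sigma> k where z: "z = Fiter f \<sigma> k x0" "admissible \<sigma>" "k mod n = c"
        by (auto simp: orbit_residue_def)
      define y where "y = Fiter f \<sigma> (n * (k div n)) x0"
      have "k = n * (k div n) + c" using z(3) mult_div_mod_eq[of n k] by simp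
      then have "z = Fiter f (\<lambda>i. \<sigma> (i + n * (k div n))) c y"
        unfolding y_def z(1) by (metis Fiter_add)
      moreover have "p * ((N + 1) * (k div n)) = n * (k div n)" by (simp add: n_def algebra_simps)
      then have "y \<in> X" "dist y x0 < \<epsilon>"
        using p(2)[OF z(2), of "(N + 1) * (k div n)"] Fiter_in_X[OF assms(1) z(2)]
        by (simp_all add: y_def dist_commute)
      ultimately show "z \<in> - ball x0 \<delta>"
        using \<epsilon>\<delta>(3)[OF _ _ admissible_shift[OF z(2), of "n * (k div n)"] c] by fastforce
    qed
    then have "cell x0 n c \<subseteq> - ball x0 \<delta>" unfolding cell_def by (intro closure_minimal) auto
    then show ?thesis using \<open>\<delta> > 0\<close> by auto
  qed
  ultimately show thesis by (rule that)
qed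

lemma cyclic_partition_unbounded:
  assumes "x0 \<in> X" "regularly_recurrent X \<Lambda> f x0" "\<not> ifs_periodic \<Lambda> f x0"
  obtains d where "d > N" "cyclic_partition x0 d"
proof -
  obtain n where n: "n > N" "\<And>c. 1 \<le> c \<Longrightarrow> c \<le> N \<Longrightarrow> x0 \<notin> cell x0 n c"
    using far_cells[OF assms] by blast
  let ?d = "return_period x0 n"
  have "?d dvd n" "0 < n" using return_period_dvd[OF assms(1)] n(1) by auto
  then have "0 < ?d" "?d \<le> n" by (simp_all add: dvd_pos_nat dvd_imp_le)
  moreover have "x0 \<in> cell x0 n (?d mod n)"
    using self_in_cell_iff_return_period_dvd[OF assms(1) \<open>0 < n\<close>] by simp
  ultimately have "?d > N"
    using n(1) n(2)[of ?d] by (cases "?d > N") auto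
  then show thesis using cyclic_partition_return_period[OF assms(1,2) \<open>0 < n\<close>] by (rule that)
qed

end

locale ifs_recurrent_point = ifs +
  fixes x0
  assumes x0: "x0 \<in> X" "regularly_recurrent X \<Lambda> f x0" "\<not> ifs_periodic \<Lambda> f x0"
begin

definition alpha :: "nat \<Rightarrow> nat" where
  "alpha = (SOME \<alpha>. (\<forall>i. prime (\<alpha> i)) \<and> (\<forall>m. cyclic_partition x0 (\<Prod>i<m. \<alpha> i)) \<and>
     (\<forall>g. cyclic_partition x0 g \<longrightarrow> (\<exists>m. g dvd (\<Prod>i<m. \<alpha> i))))"

definition level :: "nat \<Rightarrow> nat" where
  "level m = (\<Prod>i<m. alpha i)"

lemma alpha_spec:
  "prime (alpha i)" "cyclic_partition x0 (level m)"
  "cyclic_partition x0 g \<Longrightarrow> \<exists>m. g dvd level m"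
proof -
  obtain \<alpha> :: "nat \<Rightarrow> nat" where \<alpha>: "\<And>i. prime (\<alpha> i)"
    "\<And>m. (\<Prod>i<m. \<alpha> i) \<in> {g. cyclic_partition x0 g}"
    "\<And>g. g \<in> {g. cyclic_partition x0 g} \<Longrightarrow> \<exists>m. g dvd (\<Prod>i<m. \<alpha> i)"
  proof (rule prime_chain_cofinal_in_lcm_closed)
    show "0 \<notin> {g. cyclic_partition x0 g}" "1 \<in> {g. cyclic_partition x0 g}"
      by (simp_all add: cyclic_partition_def)
    show "lcm a b \<in> {g. cyclic_partition x0 g}"
      if "a \<in> {g. cyclic_partition x0 g}" "b \<in> {g. cyclic_partition x0 g}" for a b
      using that by (simp add: cyclic_partition_lcm)
    show "d \<in> {g. cyclic_partition x0 g}" if "a \<in> {g. cyclic_partition x0 g}" "d dvd a" for a d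
      using that by (simp add: cyclic_partition_dvd)
    show "\<exists>g\<in>{g. cyclic_partition x0 g}. N < g" for N
      using cyclic_partition_unbounded[OF x0] by blast
  qed blast
  have "\<exists>\<alpha>::nat \<Rightarrow> nat. (\<forall>i. prime (\<alpha> i)) \<and> (\<forall>m. cyclic_partition x0 (\<Prod>i<m. \<alpha> i)) \<and>
     (\<forall>g. cyclic_partition x0 g \<longrightarrow> (\<exists>m. g dvd (\<Prod>i<m. \<alpha> i)))"
    by (rule exI[of _ \<alpha>]) (use \<alpha> in simp)
  from someI_ex[OF this] show "prime (alpha i)" "cyclic_partition x0 (level m)"
    "cyclic_partition x0 g \<Longrightarrow> \<exists>m. g dvd level m"
    unfolding alpha_def level_def by blast+
qed

lemma level_Suc: "level (Suc m) = level m * alpha m"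
  by (simp add: level_def)

lemma level_pos: "level m > 0"
  using alpha_spec(2) by (simp add: cyclic_partition_def)

lemma alpha_pos: "alpha m > 0"
  using alpha_spec(1) prime_gt_0_nat by blast

lemma level_dvd: "i \<le> j \<Longrightarrow> level i dvd level j"
  by (rule dvd_chain_mono) (simp add: level_Suc)

text \<open>The factor map of the theorem is code: its digits are the mixed-radix digits of the
  cell indices of a point in the nested cyclic partitions of periods level i.\<close>
definition address :: "nat \<Rightarrow> 'a \<Rightarrow> nat" where
  "address i x = cell_index x0 (level i) x"

definition code :: "'a \<Rightarrow> nat \<Rightarrow> nat" where
  "code x i = address (Suc i) x div level i"

lemma address_correct:
  assumes "x \<in> X"
  shows "address i x < level i" "x \<in> cell x0 (level i) (address i x)"
  using cell_index_correct[OF x0(1) alpha_spec(2) assms] unfolding address_def by auto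

lemma address_unique: "j < level i \<Longrightarrow> x \<in> cell x0 (level i) j \<Longrightarrow> address i x = j"
  unfolding address_def using cell_index_unique[OF alpha_spec(2)] by blast

lemma address_mod:
  assumes "x \<in> X" and "i \<le> j"
  shows "address j x mod level i = address i x"
proof -
  have "x \<in> cell x0 (level i) (address j x mod level i)"
    using cell_subset_cell_dvd[OF level_dvd[OF assms(2)]] address_correct(2)[OF assms(1), of j] by blast
  then show ?thesis using address_unique level_pos by (metis mod_less_divisor)
qed

lemma address_eq_digit_sum:
  assumes "x \<in> X"
  shows "address i x = (\<Sum>t<i. code x t * level t)"
proof (induction i)
  case 0 then show ?case using address_correct(1)[OF assms, of 0] by (simp add: level_def)
next
  case (Suc i)
  have "address (Suc i) x = address (Suc i) x div level i * level i + address (Suc i) x mod level i"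
    by simp
  also have "address (Suc i) x mod level i = address i x" using address_mod[OF assms] by simp
  finally show ?case using Suc unfolding code_def by simp
qed

lemma code_less: "x \<in> X \<Longrightarrow> code x i < alpha i"
  unfolding code_def
  by (rule less_mult_imp_div_less) (use address_correct(1)[of x "Suc i"] in \<open>simp add: level_Suc mult.commute\<close>)

lemma code_in_Delta: "x \<in> X \<Longrightarrow> code x \<in> Delta alpha"
  using code_less by (auto simp: Delta_def)

lemma address_map:
  assumes "x \<in> X" and "l \<in> \<Lambda>"
  shows "address i (f l x) = (address i x + 1) mod level i"
  using map_in_cell[OF x0(1) assms(2) address_correct(2)[OF assms(1)]] address_unique level_pos
  by (metis mod_less_divisor)

lemma code_map:
  assumes "x \<in> X" and "l \<in> \<Lambda>"
  shows "adding_machine alpha (code x) = code (f l x)"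
proof
  fix i
  have "adding_machine alpha (code x) i
      = ((\<Sum>t<Suc i. code x t * level t) + 1) mod level (Suc i) div level i"
    unfolding level_def by (rule adding_machine_eq_digit_sum[OF alpha_pos])
  also have "(\<Sum>t<Suc i. code x t * level t) = address (Suc i) x"
    by (rule address_eq_digit_sum[OF assms(1), symmetric])
  also have "(address (Suc i) x + 1) mod level (Suc i) div level i = code (f l x) i"
    by (simp add: code_def address_map[OF assms])
  finally show "adding_machine alpha (code x) i = code (f l x) i" .
qed

lemma code_surj:
  assumes "r \<in> Delta alpha"
  obtains y where "y \<in> X" "code y = r"
proof -
  define v where "v i = (\<Sum>t<i. r t * level t)" for i
  have v_Suc: "v (Suc i) = v i + r i * level i" for i by (simp add: v_def)
  have v_less: "v i < level i" for i
  proof (induction i)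
    case (Suc i)
    have "r i + 1 \<le> alpha i" using assms by (simp add: Delta_def Suc_le_eq)
    then have "(r i + 1) * level i \<le> alpha i * level i" by (rule mult_right_mono) simp
    then show ?case using Suc by (simp add: v_Suc level_Suc algebra_simps)
  qed (simp add: v_def level_def)
  define K where "K i = cell x0 (level i) (v i)" for i
  have K_Suc: "K (Suc i) \<subseteq> K i" for i
  proof -
    have "v (Suc i) mod level i = v i" using v_less[of i] by (simp add: v_Suc)
    moreover have "level i dvd level (Suc i)" by (simp add: level_Suc)
    ultimately show ?thesis
      unfolding K_def using cell_subset_cell_dvd[of "level i" "level (Suc i)" x0 "v (Suc i)"] by simp
  qed
  have K_antimono: "K j \<subseteq> K i" if "i \<le> j" for i j
    using that
  proof (induction j rule: dec_induct)
    case (step j)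
    then show ?case using K_Suc[of j] by blast
  qed simp
  have "X \<inter> \<Inter>(range K) \<noteq> {}"
  proof (rule compact_imp_fip[OF compact_X])
    show "closed T" if "T \<in> range K" for T using that closed_cell unfolding K_def by auto
    fix F assume "finite F" "F \<subseteq> range K"
    then obtain I where I: "finite I" "F = K ` I" by (rule finite_subset_image[elim_format]) blast
    have "i \<le> Max (insert 0 I)" if "i \<in> I" for i using I(1) that by simp
    then have "K (Max (insert 0 I)) \<subseteq> \<Inter>F" using I(2) K_antimono by blast
    moreover have "K (Max (insert 0 I)) \<subseteq> X" unfolding K_def by (rule cell_subset_X[OF x0(1)])
    moreover have "K (Max (insert 0 I)) \<noteq> {}" unfolding K_def using cell_nonempty[OF v_less] .
    ultimately show "X \<inter> \<Inter>F \<noteq> {}" by blast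
  qed
  then obtain y where y: "y \<in> X" "\<And>i. y \<in> K i" by blast
  have "address i y = v i" for i using address_unique[OF v_less] y(2) unfolding K_def by blast
  then have "code y = r"
    using v_less level_pos by (simp add: fun_eq_iff code_def v_Suc)
  with y(1) show thesis by (rule that)
qed

lemma code_continuous:
  assumes "x \<in> X" and "e > 0"
  shows "\<exists>d>0. \<forall>y\<in>X. dist y x < d \<longrightarrow> d_alpha (code y) (code x) < e"
proof -
  obtain K where K: "(1/2::real) ^ K < e" using real_arch_pow_inv[OF \<open>e > 0\<close>, of "1/2"] by auto
  define C where "C = (\<Union>j\<in>{j. j < level K \<and> j \<noteq> address K x}. cell x0 (level K) j)"
  have "closed C" unfolding C_def by (intro closed_UN ballI closed_cell) auto
  moreover have "x \<notin> C" using address_unique by (force simp: C_def)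
  ultimately obtain d where d: "d > 0" "ball x d \<subseteq> - C"
    using open_contains_ball[of "- C"] by (auto simp: open_Compl)
  have "d_alpha (code y) (code x) < e" if y: "y \<in> X" "dist y x < d" for y
  proof -
    have "y \<notin> C" using d y by (auto simp: dist_commute)
    then have "address K y = address K x"
      using address_correct[OF y(1), of K] unfolding C_def by blast
    then have "code y t = code x t" if "t < K" for t
      using address_mod[OF y(1), of "Suc t" K] address_mod[OF assms(1), of "Suc t" K] that
      by (simp add: code_def)
    then have "d_alpha (code y) (code x) \<le> (1/2) ^ K" by (rule d_alpha_le_if_agree)
    then show ?thesis using K by simp
  qed
  with d(1) show ?thesis by blast
qed

lemma code_fibre_regularly_recurrent:
  assumes x: "x \<in> X" "regularly_recurrent X \<Lambda> f x" and y: "y \<in> X" "code y = code x"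
  shows "y = x"
proof -
  have same_address: "address i y = address i x" for i
    using address_eq_digit_sum[OF x(1)] address_eq_digit_sum[OF y(1)] y(2) by simp
  have close: "dist y x \<le> e" if "e > 0" for e
  proof -
    obtain n where n: "n \<ge> 1" "\<And>\<sigma> i. admissible \<sigma> \<Longrightarrow> Fiter f \<sigma> (n * i) x \<in> ball x e"
      using regularly_recurrentD[OF x(2), of "ball x e"] \<open>e > 0\<close> by auto
    then have "n > 0" by simp
    have "cell x n 0 \<subseteq> cball x e"
      unfolding cell_def orbit_residue_def using n(2)
      by (intro closure_minimal) (fastforce intro: less_imp_le)+
    \<comment> \<open>the return period d of x gives a cyclic partition, which a level M refines\<close>
    let ?d = "return_period x n"
    have "cyclic_partition x0 ?d"
      using cyclic_partition_base_change[OF x(1) x0(1) cyclic_partition_return_period[OF x \<open>n > 0\<close>]] .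
    then obtain m where m: "?d dvd level m" using alpha_spec(3) by blast
    define M where "M = level m"
    define c where "c = address m x"
    have c: "c < M" "x \<in> cell x0 M c" using address_correct[OF x(1), of m] unfolding c_def M_def by auto
    have "y \<in> cell x0 M c" using address_correct(2)[OF y(1), of m] same_address unfolding c_def M_def by simp
    have "y \<in> (\<Union>j<M. cell x M j)" using X_subset_cells[OF x(1) level_pos] y(1) unfolding M_def ..
    then obtain t where t: "t < M" "y \<in> cell x M t" by blast
    have "y \<in> cell x0 M ((c + t) mod M)" using cell_shift[OF x0(1) c(2)] t(2) by blast
    then have "address m y = (c + t) mod M"
      unfolding M_def by (rule address_unique[OF mod_less_divisor[OF level_pos]])
    then have "[c + t = c + 0] (mod M)" using same_address c(1) unfolding c_def cong_def by simp
    then have "[t = 0] (mod M)" by (simp only: cong_add_lcancel_nat)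
    then have "t = 0" using t(1) c(1) by (auto intro: cong_less_modulus_unique_nat)
    then have "y \<in> cell x M 0" using t by simp
    also have "\<dots> \<subseteq> cell x ?d 0" using cell_subset_cell_dvd[OF m[folded M_def], of x 0] by simp
    also have "\<dots> \<subseteq> cell x n 0" by (rule cell_return_period_zero[OF x(1) \<open>n > 0\<close>])
    also have "\<dots> \<subseteq> cball x e" by fact
    finally show ?thesis by (simp add: dist_commute)
  qed
  have "dist y x \<le> 0" by (rule field_le_epsilon) (simp add: close)
  then show ?thesis by simp
qed

end

theorem theorem4p6:
  fixes X :: "'a::metric_space set" and \<Lambda> :: "'l set" and f :: "'l \<Rightarrow> 'a \<Rightarrow> 'a"
  assumes "finite \<Lambda>" and "\<Lambda> \<noteq> {}"
    and "compact X" and "infinite X"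
    and "\<And>l. l \<in> \<Lambda> \<Longrightarrow> continuous_on X (f l)"
    and "\<And>l. l \<in> \<Lambda> \<Longrightarrow> f l ` X \<subseteq> X"
    and "ifs_minimal X \<Lambda> f"
    and "\<exists>x\<in>X. regularly_recurrent X \<Lambda> f x \<and> \<not> ifs_periodic \<Lambda> f x"
  shows "\<exists>(\<alpha>::nat \<Rightarrow> nat) (\<pi>::'a \<Rightarrow> nat \<Rightarrow> nat).
     (\<forall>i. prime (\<alpha> i)) \<and>
     \<pi> ` X = Delta \<alpha> \<and>
     (\<forall>x\<in>X. \<forall>e>0. \<exists>d>0. \<forall>y\<in>X. dist y x < d \<longrightarrow> d_alpha (\<pi> y) (\<pi> x) < e) \<and>
     (\<forall>l\<in>\<Lambda>. \<forall>x\<in>X. adding_machine \<alpha> (\<pi> x) = \<pi> (f l x)) \<and>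
     (\<forall>x\<in>X. regularly_recurrent X \<Lambda> f x \<longrightarrow> {y\<in>X. \<pi> y = \<pi> x} = {x})"
proof -
  obtain x0 where "x0 \<in> X" "regularly_recurrent X \<Lambda> f x0" "\<not> ifs_periodic \<Lambda> f x0"
    using assms(8) by blast
  then interpret ifs_recurrent_point X \<Lambda> f x0
    by unfold_locales (use assms in auto)
  have "code ` X = Delta alpha"
  proof
    show "Delta alpha \<subseteq> code ` X"
      by (metis code_surj image_eqI subsetI)
  qed (use code_in_Delta in blast)
  moreover have "\<forall>x\<in>X. \<forall>e>0. \<exists>d>0. \<forall>y\<in>X. dist y x < d \<longrightarrow> d_alpha (code y) (code x) < e"
    using code_continuous by blast
  moreover have "{y\<in>X. code y = code x} = {x}" if "x \<in> X" "regularly_recurrent X \<Lambda> f x" for x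
    using code_fibre_regularly_recurrent[OF that] that(1) by blast
  ultimately show ?thesis
    using alpha_spec(1) code_map by blast
qed

end
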